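(* Let $N\ge1$, $n\ge1$, and let $f=f(w)$ be a polynomial in one variable. Then in $\tilde{\mathcal A}_\hbar$, $$\Big[\sum_{i=1}^N\bar B_n(\bar w_i),E_1[f]\Big]=-\hbar\,E_1[f\cdot(\bar w+\hbar)^{n-1}],\qquad\Big[\sum_{i=1}^N\bar B_n(\bar w_i),F_1[f]\Big]=\hbar\,F_1[f\cdot(\bar w+\hbar)^{n-1}],$$ where $\bar w_i=w_i-(N-1)\mathbf t$ and $f\cdot(\bar w+\hbar)^{n-1}$ denotes the polynomial $w\mapsto f(w)\,(w-(N-1)\mathbf t+\hbar)^{n-1}$.
   Context: $\tilde{\mathcal A}_\hbar$ is the $\mathbb C[\hbar,\mathbf t]$-algebra generated by $w_1,\dots,w_N$, $\mathsf u_1^{\pm1},\dots,\mathsf u_N^{\pm1}$, $(w_i-w_j)^{-1}$ ($i\ne j$) with relations: the $w_i$ and $(w_i-w_j)^{-1}$ pairwise commute, $(w_i-w_j)(w_i-w_j)^{-1}=1$, $[\mathsf u_i,\mathsf u_j]=0$, $\mathsf u_i\mathsf u_i^{-1}=\mathsf u_i^{-1}\mathsf u_i=1$, $[\mathsf u_i^{\pm1},w_j]=\pm\delta_{ij}\hbar\mathsf u_i^{\pm1}$. For a one-variable polynomial $f$: $E_1[f]=\sum_{i=1}^Nf(w_i)\prod_{j\ne i}\frac{w_i-w_j-\mathbf t}{w_i-w_j}\mathsf u_i$ and $F_1[f]=\sum_{i=1}^Nf(w_i-\hbar)\prod_{j\ne i}\frac{w_i-w_j+\mathbf t}{w_i-w_j}\mathsf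 u_i^{-1}$. $B_n$ are the Bernoulli polynomials ($B_n(x+1)-B_n(x)=nx^{n-1}$, $\int_0^1B_n=0$) and $\bar B_n(w)=(-\hbar)^nB_n(-w/\hbar)/n$. *)

theory Defs
  imports "HOL-Analysis.Analysis" "HOL-Computational_Algebra.Polynomial"
begin

definition bernoulli_poly :: "nat \<Rightarrow> real poly" where
  "bernoulli_poly n = (THE p. (\<forall>x. poly p (x + 1) - poly p x = of_nat n * x ^ (n - 1))
                              \<and> integral {0..1} (poly p) = 0)"

definition comm :: "'a::ring \<Rightarrow> 'a \<Rightarrow> 'a" where
  "comm a b = a * b - b * a"

text \<open>Evaluation of a complex polynomial at an element of an algebra, the complex
  scalars acting through the structure map emb.\<close>
definition peval :: "(complex \<Rightarrow> 'a::ring_1) \<Rightarrow> complex poly \<Rightarrow> 'a \<Rightarrow> 'a" where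
  "peval emb f x = (\<Sum>k\<le>degree f. emb (coeff f k) * x ^ k)"

text \<open>\<open>Bbar_n(x) = (-h)^n B_n(-x/h)/n\<close>, written out as the homogeneous polynomial in
  (h, x) it denotes: \<open>(1/n) \<Sum>_j c_j (-h)^(n-j) x^j\<close> with \<open>c_j\<close> the coefficients of B_n.\<close>
definition Bbar :: "(complex \<Rightarrow> 'a::ring_1) \<Rightarrow> 'a \<Rightarrow> nat \<Rightarrow> 'a \<Rightarrow> 'a" where
  "Bbar emb h n x = emb (complex_of_real (1 / real n)) *
     (\<Sum>j\<le>n. emb (complex_of_real (coeff (bernoulli_poly n) j)) * (- h) ^ (n - j) * x ^ j)"

text \<open>E_1[g] and F_1[g]; g is the evaluation map of a one-variable polynomial.
  The product over j /= i is an ordered product (j increasing); its factors commute.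
  d i j stands for (w_i - w_j)^{-1}, ui i for u_i^{-1}.\<close>
definition E1 :: "nat \<Rightarrow> (nat \<Rightarrow> 'a::ring_1) \<Rightarrow> (nat \<Rightarrow> 'a) \<Rightarrow> (nat \<Rightarrow> nat \<Rightarrow> 'a) \<Rightarrow> 'a
                   \<Rightarrow> ('a \<Rightarrow> 'a) \<Rightarrow> 'a" where
  "E1 N w u d t g = (\<Sum>i\<in>{1..N}. g (w i) *
      prod_list (map (\<lambda>j. (w i - w j - t) * d i j) (filter (\<lambda>j. j \<noteq> i) [1..<N+1])) * u i)"

definition F1 :: "nat \<Rightarrow> (nat \<Rightarrow> 'a::ring_1) \<Rightarrow> (nat \<Rightarrow> 'a) \<Rightarrow> (nat \<Rightarrow> nat \<Rightarrow> 'a) \<Rightarrow> 'a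
                   \<Rightarrow> 'a \<Rightarrow> ('a \<Rightarrow> 'a) \<Rightarrow> 'a" where
  "F1 N w ui d t h g = (\<Sum>i\<in>{1..N}. g (w i - h) *
      prod_list (map (\<lambda>j. (w i - w j + t) * d i j) (filter (\<lambda>j. j \<noteq> i) [1..<N+1])) * ui i)"

end

theory Submission
  imports Defs
begin

text \<open>Since \<open>h\<close> is central, \<open>Bbar_n(x)\<close> is \<open>1/n\<close> times the degree-\<open>n\<close> homogenisation of
  \<open>B_n\<close> evaluated at \<open>(-h, x)\<close>, and the difference equation \<open>B_n(y+1) - B_n(y) = n y^(n-1)\<close>
  becomes \<open>Bbar_n(x) - Bbar_n(x + h) = -h (x + h)^(n-1)\<close>.
  The operator \<open>u_i\<close> shifts \<open>w_i\<close> by \<open>h\<close> and commutes with the other \<open>w_j\<close>, so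
  \<open>u_i \<Sum>_j Bbar_n(wbar_j) = (\<Sum>_j Bbar_n(wbar_j + \<delta>_ij h)) u_i\<close>, whereas the coefficient
  \<open>f(w_i) \<Prod>_j (\<dots>)\<close> of \<open>u_i\<close> in \<open>E_1[f]\<close> commutes with every \<open>w_j\<close>. Hence the commutator
  with the \<open>i\<close>-th summand of \<open>E_1[f]\<close> only sees \<open>Bbar_n(wbar_i) - Bbar_n(wbar_i + h)\<close>.
  The same argument with \<open>u_i^-1\<close> and the shift \<open>-h\<close> handles \<open>F_1[f]\<close>.\<close>

section \<open>Bernoulli polynomials\<close>

definition forward_diff :: "'a::comm_ring_1 poly \<Rightarrow> 'a poly" where
  "forward_diff p = p \<circ>\<^sub>p [:1, 1:] - p"

lemma poly_forward_diff [simp]: "poly (forward_diff p) x = poly p (x + 1) - poly p x"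
  by (simp add: forward_diff_def poly_pcompose add.commute)

lemma forward_diff_add: "forward_diff (p + q) = forward_diff p + forward_diff q"
  by (simp add: forward_diff_def pcompose_add)

lemma forward_diff_diff: "forward_diff (p - q) = forward_diff p - forward_diff q"
  by (simp add: forward_diff_def pcompose_diff)

lemma forward_diff_const [simp]: "forward_diff [:c:] = 0"
  by (simp add: forward_diff_def)

lemma forward_diff_monom:
  fixes a :: "'a::comm_ring_1"
  shows "degree (forward_diff (monom a (Suc m))) \<le> m"
    and "coeff (forward_diff (monom a (Suc m))) m = of_nat (Suc m) * a"
proof -
  have comp: "monom a k \<circ>\<^sub>p [:1, 1:] = smult a ([:1, 1:] ^ k)" for k
    by (induction k) (simp_all add: monom_0 monom_Suc pcompose_pCons)
  have binom: "coeff ([:1, 1:] ^ k) j = (of_nat (k choose j) :: 'a)" for k j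
    by (cases "j \<le> k") (simp_all add: coeff_linear_poly_power coeff_eq_0 degree_linear_power binomial_eq_0)
  have coeff: "coeff (forward_diff (monom a (Suc m))) j
      = a * of_nat (Suc m choose j) - (if j = Suc m then a else 0)" for j
    by (simp add: forward_diff_def comp binom coeff_monom del: power_Suc)
  show "degree (forward_diff (monom a (Suc m))) \<le> m"
    by (rule degree_le) (auto simp: coeff binomial_eq_0)
  show "coeff (forward_diff (monom a (Suc m))) m = of_nat (Suc m) * a"
    by (simp add: coeff mult.commute)
qed

lemma forward_diff_surj:
  fixes r :: "'a::field_char_0 poly"
  assumes "degree r \<le> k"
  shows "\<exists>q. degree q \<le> Suc k \<and> forward_diff q = r"
  using assms
proof (induction k arbitrary: r)
  case 0
  then obtain a where "r = [:a:]"
    using degree0_coeffs by blast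
  then have "forward_diff [:0, a:] = r"
    by (simp add: forward_diff_def pcompose_pCons)
  then show ?case
    by (intro exI[of _ "[:0, a:]"]) simp
next
  case (Suc k)
  define s where "s = monom (coeff r (Suc k) / of_nat (Suc (Suc k))) (Suc (Suc k))"
  have "degree (forward_diff s) \<le> Suc k" "coeff (forward_diff s) (Suc k) = coeff r (Suc k)"
    unfolding s_def by (simp_all only: forward_diff_monom) (simp del: of_nat_Suc)
  moreover have "coeff r j = 0" if "Suc k < j" for j
    using Suc.prems that by (simp add: coeff_eq_0)
  ultimately have "degree (r - forward_diff s) \<le> k"
    by (intro degree_le) (metis Suc_lessI coeff_diff coeff_eq_0 diff_self le_less_trans)
  then obtain q where "degree q \<le> Suc k" "forward_diff q = r - forward_diff s"
    using Suc.IH by blast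
  moreover have "degree s \<le> Suc (Suc k)"
    by (simp add: s_def degree_monom_le)
  ultimately show ?case
    by (intro exI[of _ "q + s"]) (simp add: degree_add_le forward_diff_add)
qed

lemma forward_diff_eq_0_imp_const:
  fixes p :: "'a::{idom, ring_char_0} poly"
  assumes "forward_diff p = 0"
  shows "p = [:poly p 0:]"
proof (rule ccontr)
  assume "p \<noteq> [:poly p 0:]"
  then have "finite {x. poly (p - [:poly p 0:]) x = 0}"
    by (intro poly_roots_finite) simp
  moreover have "poly p (of_nat m) = poly p 0" for m
  proof (induction m)
    case (Suc m)
    have "poly p (of_nat m + 1) - poly p (of_nat m) = 0"
      using assms by (metis poly_0 poly_forward_diff)
    with Suc show ?case
      by (simp add: add.commute)
  qed simp
  then have "range of_nat \<subseteq> {x. poly (p - [:poly p 0:]) x = 0}"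
    by auto
  ultimately have "finite (range (of_nat :: nat \<Rightarrow> 'a))"
    by (rule finite_subset[rotated])
  then show False
    using finite_imageD[OF _ inj_of_nat] by blast
qed

lemma integrable_poly_real: "poly (p :: real poly) integrable_on {a..b}"
  by (intro integrable_continuous_interval continuous_intros)

lemma bernoulli_poly_eqI:
  assumes fd: "forward_diff p = monom (of_nat n) (n - 1)" and int: "integral {0..1} (poly p) = 0"
  shows "bernoulli_poly n = p"
  unfolding bernoulli_poly_def
proof (rule the_equality)
  have fd_poly: "poly p (x + 1) - poly p x = of_nat n * x ^ (n - 1)" for x
    using arg_cong[OF fd, of "\<lambda>q. poly q x"] by (simp add: poly_monom)
  then show "(\<forall>x. poly p (x + 1) - poly p x = of_nat n * x ^ (n - 1)) \<and> integral {0..1} (poly p) = 0"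
    using int by simp
  fix q :: "real poly"
  assume q: "(\<forall>x. poly q (x + 1) - poly q x = of_nat n * x ^ (n - 1)) \<and> integral {0..1} (poly q) = 0"
  then have "forward_diff (q - p) = 0"
    using fd_poly by (simp add: forward_diff_diff flip: poly_all_0_iff_0)
  then have const: "q - p = [:poly (q - p) 0:]"
    by (rule forward_diff_eq_0_imp_const)
  have "poly q x - poly p x = poly (q - p) 0" for x
    using arg_cong[OF const, of "\<lambda>r. poly r x"] by simp
  then have "(\<lambda>x. poly q x - poly p x) = (\<lambda>_. poly (q - p) 0)"
    by auto
  moreover have "integral {0..1} (\<lambda>x. poly q x - poly p x) = 0"
    using q int by (simp add: integral_diff integrable_poly_real)
  ultimately have "poly (q - p) 0 = 0"
    by simp
  with const show "q = p"
    by simp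
qed

lemma
  assumes "n \<ge> 1"
  shows forward_diff_bernoulli_poly: "forward_diff (bernoulli_poly n) = monom (of_nat n) (n - 1)"
    and degree_bernoulli_poly_le: "degree (bernoulli_poly n) \<le> n"
proof -
  obtain q :: "real poly" where q: "degree q \<le> n" "forward_diff q = monom (of_nat n) (n - 1)"
    using forward_diff_surj[of "monom (of_nat n) (n - 1)" "n - 1"] assms by (auto simp: degree_monom_le)
  define p where "p = q - [:integral {0..1} (poly q):]"
  have "forward_diff p = monom (of_nat n) (n - 1)"
    using q(2) by (simp add: p_def forward_diff_diff)
  moreover have "poly p = (\<lambda>x. poly q x - integral {0..1} (poly q))"
    by (simp add: p_def fun_eq_iff)
  then have "integral {0..1} (poly p) = 0"
    by (simp add: integral_diff[OF integrable_poly_real integrable_continuous_interval[OF continuous_on_const]])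
  ultimately have "bernoulli_poly n = p"
    by (rule bernoulli_poly_eqI)
  moreover have "degree p \<le> n"
    unfolding p_def using q(1) by (intro degree_diff_le) auto
  ultimately show "forward_diff (bernoulli_poly n) = monom (of_nat n) (n - 1)"
    and "degree (bernoulli_poly n) \<le> n"
    using \<open>forward_diff p = _\<close> by simp_all
qed

section \<open>Homogenised evaluation with central scalars\<close>

definition homog_eval :: "(complex \<Rightarrow> 'a::ring_1) \<Rightarrow> nat \<Rightarrow> real poly \<Rightarrow> 'a \<Rightarrow> 'a \<Rightarrow> 'a" where
  "homog_eval emb n p c x = (\<Sum>j\<le>n. emb (of_real (coeff p j)) * c ^ (n - j) * x ^ j)"

lemma Bbar_eq_homog_eval:
  "Bbar emb h n x = emb (of_real (1 / real n)) * homog_eval emb n (bernoulli_poly n) (- h) x"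
  by (simp add: Bbar_def homog_eval_def)

locale central_scalars =
  fixes emb :: "complex \<Rightarrow> 'a::ring_1"
  assumes emb_1 [simp]: "emb 1 = 1"
    and emb_add [simp]: "emb (a + b) = emb a + emb b"
    and emb_mult [simp]: "emb (a * b) = emb a * emb b"
    and emb_central: "emb a * x = x * emb a"
begin

lemma emb_0 [simp]: "emb 0 = 0"
  using emb_add[of 0 0] by simp

lemma emb_diff [simp]: "emb (a - b) = emb a - emb b"
  using emb_add[of "a - b" b] by (simp add: algebra_simps)

lemma emb_of_nat [simp]: "emb (of_nat k) = of_nat k"
  by (induction k) simp_all

lemma homog_eval_add:
  "homog_eval emb n (p + q) c x = homog_eval emb n p c x + homog_eval emb n q c x"
  by (simp add: homog_eval_def distrib_right sum.distrib)

lemma homog_eval_diff: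
  "homog_eval emb n (p - q) c x = homog_eval emb n p c x - homog_eval emb n q c x"
  by (simp add: homog_eval_def left_diff_distrib sum_subtractf)

lemma homog_eval_monom:
  assumes "m \<le> n"
  shows "homog_eval emb n (monom a m) c x = emb (of_real a) * c ^ (n - m) * x ^ m"
proof -
  have "homog_eval emb n (monom a m) c x
      = (\<Sum>j\<le>n. if j = m then emb (of_real a) * c ^ (n - m) * x ^ m else 0)"
    unfolding homog_eval_def by (intro sum.cong) (auto simp: coeff_monom)
  then show ?thesis
    using assms by simp
qed

lemma homog_eval_pCons:
  "homog_eval emb (Suc n) (pCons a p) c x = emb (of_real a) * c ^ Suc n + homog_eval emb n p c x * x"
  by (simp add: homog_eval_def sum.atMost_Suc_shift sum_distrib_right mult.assoc power_Suc2
      del: sum.atMost_Suc power_Suc)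

lemma homog_eval_Suc:
  assumes c: "\<And>y. c * y = y * c" and "degree p \<le> n"
  shows "homog_eval emb (Suc n) p c x = homog_eval emb n p c x * c"
proof -
  have "emb (of_real (coeff p j)) * c ^ (Suc n - j) * x ^ j
      = emb (of_real (coeff p j)) * c ^ (n - j) * x ^ j * c" if "j \<le> n" for j
    using that by (simp add: Suc_diff_le power_Suc2 mult.assoc c)
  then show ?thesis
    using assms(2) by (simp add: homog_eval_def sum_distrib_right coeff_eq_0)
qed

lemma homog_eval_shift:
  assumes c: "\<And>y. c * y = y * c" and "degree p \<le> n"
  shows "homog_eval emb n p c (x + c) = homog_eval emb n (p \<circ>\<^sub>p [:1, 1:]) c x"
  using assms(2)
proof (induction p arbitrary: n)
  case 0
  then show ?case
    by (simp add: homog_eval_def)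
next
  case (pCons a p)
  show ?case
  proof (cases n)
    case 0
    with pCons have "p = 0"
      by (auto split: if_splits)
    with 0 show ?thesis
      by (simp add: homog_eval_def)
  next
    case (Suc m)
    define r where "r = p \<circ>\<^sub>p [:1, 1:]"
    have deg: "degree p \<le> m" "degree r \<le> m"
      using pCons.prems Suc by (auto simp: r_def degree_pcompose split: if_splits)
    have "pCons a p \<circ>\<^sub>p [:1, 1:] = pCons a r + r"
      by (simp add: r_def pcompose_pCons)
    then have "homog_eval emb n (pCons a p \<circ>\<^sub>p [:1, 1:]) c x
        = emb (of_real a) * c ^ n + homog_eval emb m r c x * (x + c)"
      using Suc deg by (simp add: homog_eval_add homog_eval_pCons homog_eval_Suc[OF c] distrib_left)
    also have "homog_eval emb m r c x = homog_eval emb m p c (x + c)"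
      using pCons.IH[OF deg(1)] by (simp add: r_def)
    finally show ?thesis
      using Suc by (simp add: homog_eval_pCons)
  qed
qed

lemma homog_eval_intertwine:
  assumes c: "\<And>y. c * y = y * c" and vab: "v * a = b * v"
  shows "v * homog_eval emb n p c a = homog_eval emb n p c b * v"
proof -
  have pow: "v * a ^ j = b ^ j * v" for j
  proof (induction j)
    case (Suc j)
    then show ?case
      by (metis mult.assoc power_Suc vab)
  qed simp
  have "v * (emb q * c ^ m * a ^ j) = emb q * c ^ m * b ^ j * v" for q m j
    by (metis mult.assoc emb_central power_commuting_commutes[OF c] pow)
  then show ?thesis
    by (simp add: homog_eval_def sum_distrib_left sum_distrib_right)
qed

lemma Bbar_intertwine:
  assumes h: "\<And>y. h * y = y * h" and vab: "v * a = b * v"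
  shows "v * Bbar emb h n a = Bbar emb h n b * v"
proof -
  have "\<And>y. - h * y = y * - h"
    using h by simp
  from homog_eval_intertwine[OF this vab] show ?thesis
    unfolding Bbar_eq_homog_eval by (metis emb_central mult.assoc)
qed

lemma Bbar_diff:
  assumes h: "\<And>y. h * y = y * h" and "n \<ge> 1"
  shows "Bbar emb h n x - Bbar emb h n (x + h) = - (h * (x + h) ^ (n - 1))"
proof -
  define z where "z = x + h"
  define H where "H p = homog_eval emb n p (- h) z" for p
  have mh: "\<And>y. - h * y = y * - h"
    using h by simp
  have "homog_eval emb n (bernoulli_poly n) (- h) x = H (bernoulli_poly n \<circ>\<^sub>p [:1, 1:])"
    using homog_eval_shift[OF mh degree_bernoulli_poly_le[OF assms(2)], of "z"] by (simp add: H_def z_def)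
  then have "homog_eval emb n (bernoulli_poly n) (- h) x - H (bernoulli_poly n) = H (monom (of_nat n) (n - 1))"
    using forward_diff_bernoulli_poly[OF assms(2)] by (simp add: H_def forward_diff_def flip: homog_eval_diff)
  also have "\<dots> = of_nat n * (- h * z ^ (n - 1))"
    using assms(2) by (simp add: H_def homog_eval_monom mult.assoc)
  finally have "homog_eval emb n (bernoulli_poly n) (- h) x - homog_eval emb n (bernoulli_poly n) (- h) z
      = of_nat n * (- h * z ^ (n - 1))"
    unfolding H_def .
  then have "Bbar emb h n x - Bbar emb h n z = emb (of_real (1 / real n)) * of_nat n * (- h * z ^ (n - 1))"
    unfolding Bbar_eq_homog_eval by (simp only: right_diff_distrib[symmetric] mult.assoc)
  also have "emb (of_real (1 / real n)) * of_nat n = emb (of_real (1 / real n * real n))"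
    by (simp only: emb_mult of_real_mult of_real_of_nat_eq emb_of_nat)
  also have "\<dots> = 1"
    using assms(2) by simp
  finally show ?thesis
    by (simp add: z_def)
qed

end

section \<open>Centralizers and commutators\<close>

definition centralizer :: "'a::ring_1 \<Rightarrow> 'a set" where
  "centralizer x = {y. x * y = y * x}"

lemma centralizer_sym: "a \<in> centralizer b \<longleftrightarrow> b \<in> centralizer a"
  by (auto simp: centralizer_def)

lemma centralizer_of_nat [intro]: "of_nat k \<in> centralizer x"
  by (simp add: centralizer_def mult_of_nat_commute)

lemma centralizer_add [intro]: "a \<in> centralizer x \<Longrightarrow> b \<in> centralizer x \<Longrightarrow> a + b \<in> centralizer x"
  by (simp add: centralizer_def distrib_left distrib_right)

lemma centralizer_diff [intro]: "a \<in> centralizer x \<Longrightarrow> b \<in> centralizer x \<Longrightarrow> a - b \<in> centralizer x"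
  by (simp add: centralizer_def left_diff_distrib right_diff_distrib)

lemma centralizer_mult [intro]: "a \<in> centralizer x \<Longrightarrow> b \<in> centralizer x \<Longrightarrow> a * b \<in> centralizer x"
  by (simp add: centralizer_def) (metis mult.assoc)

lemma centralizer_power [intro]: "a \<in> centralizer x \<Longrightarrow> a ^ k \<in> centralizer x"
  by (simp add: centralizer_def power_commuting_commutes)

lemma centralizer_sum [intro]: "(\<And>i. i \<in> A \<Longrightarrow> f i \<in> centralizer x) \<Longrightarrow> sum f A \<in> centralizer x"
  by (simp add: centralizer_def sum_distrib_left sum_distrib_right)

lemma centralizer_prod_list [intro]: "(\<And>a. a \<in> set as \<Longrightarrow> a \<in> centralizer x) \<Longrightarrow> prod_list as \<in> centralizer x"
  by (induction as) (use centralizer_of_nat[of 1] in \<open>simp_all add: centralizer_mult\<close>)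

lemma comm_sum: "comm x (sum f A) = (\<Sum>i\<in>A. comm x (f i))"
  by (simp add: comm_def sum_distrib_left sum_distrib_right sum_subtractf)

lemma comm_mult_intertwine:
  assumes "a \<in> centralizer x" and "v * x = x' * v"
  shows "comm x (a * v) = a * (x - x') * v"
proof -
  have "comm x (a * v) = (x * a) * v - a * (v * x)"
    by (simp add: comm_def mult.assoc)
  with assms show ?thesis
    by (simp add: centralizer_def mult.assoc left_diff_distrib right_diff_distrib)
qed

context central_scalars
begin

lemma emb_in_centralizer [intro]: "emb a \<in> centralizer x"
  by (simp add: centralizer_def emb_central)

lemma peval_in_centralizer [intro]: "a \<in> centralizer x \<Longrightarrow> peval emb f a \<in> centralizer x"
  unfolding peval_def by blast

end

locale shift_operators = central_scalars emb
  for emb :: "complex \<Rightarrow> 'a::ring_1" +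
  fixes N :: nat and h t :: 'a and w :: "nat \<Rightarrow> 'a" and d :: "nat \<Rightarrow> nat \<Rightarrow> 'a"
  assumes h_central: "h * x = x * h"
    and t_central: "t * x = x * t"
    and w_comm: "i \<in> {1..N} \<Longrightarrow> j \<in> {1..N} \<Longrightarrow> w i * w j = w j * w i"
    and wd_comm: "i \<in> {1..N} \<Longrightarrow> j \<in> {1..N} \<Longrightarrow> k \<in> {1..N} \<Longrightarrow> i \<noteq> j \<Longrightarrow>
                  w k * d i j = d i j * w k"
begin

definition wbar :: "nat \<Rightarrow> 'a" where
  "wbar i = w i - of_nat (N - 1) * t"

lemma h_in_centralizer [intro]: "h \<in> centralizer x"
  and t_in_centralizer [intro]: "t \<in> centralizer x"
  using h_central t_central by (simp_all add: centralizer_def)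

lemma h_commute_left: "a * (h * b) = h * (a * b)"
  by (metis h_central mult.assoc)

lemma w_in_centralizer_w [intro]: "i \<in> {1..N} \<Longrightarrow> k \<in> {1..N} \<Longrightarrow> w i \<in> centralizer (w k)"
  using w_comm by (simp add: centralizer_def)

lemma d_in_centralizer_w [intro]:
  "i \<in> {1..N} \<Longrightarrow> j \<in> {1..N} \<Longrightarrow> k \<in> {1..N} \<Longrightarrow> i \<noteq> j \<Longrightarrow> d i j \<in> centralizer (w k)"
  using wd_comm by (simp add: centralizer_def)

lemma wbar_in_centralizer:
  assumes "\<And>k. k \<in> {1..N} \<Longrightarrow> a \<in> centralizer (w k)" and "j \<in> {1..N}"
  shows "wbar j \<in> centralizer a"
  using assms unfolding wbar_def centralizer_sym[of a] by blast

lemma Bbar_sum_in_centralizer: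
  assumes "\<And>k. k \<in> {1..N} \<Longrightarrow> a \<in> centralizer (w k)"
  shows "(\<Sum>j\<in>{1..N}. Bbar emb h n (wbar j)) \<in> centralizer a"
proof -
  have "a * Bbar emb h n (wbar j) = Bbar emb h n (wbar j) * a" if "j \<in> {1..N}" for j
    using wbar_in_centralizer[OF assms that] by (intro Bbar_intertwine h_central) (simp add: centralizer_def)
  then show ?thesis
    by (intro centralizer_sum) (simp add: centralizer_def)
qed

lemma comm_Bbar_sum_shift:
  assumes i: "i \<in> {1..N}" and s: "\<And>y. s * y = y * s"
    and a: "\<And>k. k \<in> {1..N} \<Longrightarrow> a \<in> centralizer (w k)"
    and v: "\<And>j. j \<in> {1..N} \<Longrightarrow> v * w j = (w j + (if j = i then s else 0)) * v"
  shows "comm (\<Sum>j\<in>{1..N}. Bbar emb h n (wbar j)) (a * v)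
       = a * (Bbar emb h n (wbar i) - Bbar emb h n (wbar i + s)) * v"
proof -
  define shifted where "shifted j = wbar j + (if j = i then s else 0)" for j
  have "of_nat (N - 1) * t \<in> centralizer v"
    by blast
  then have "v * wbar j = shifted j * v" if "j \<in> {1..N}" for j
    using v[OF that] by (simp add: wbar_def shifted_def centralizer_def algebra_simps)
  then have "v * (\<Sum>j\<in>{1..N}. Bbar emb h n (wbar j)) = (\<Sum>j\<in>{1..N}. Bbar emb h n (shifted j)) * v"
    by (simp add: sum_distrib_left sum_distrib_right Bbar_intertwine h_central)
  then have "comm (\<Sum>j\<in>{1..N}. Bbar emb h n (wbar j)) (a * v)
      = a * (\<Sum>j\<in>{1..N}. Bbar emb h n (wbar j) - Bbar emb h n (shifted j)) * v"
    using Bbar_sum_in_centralizer[OF a] by (simp add: comm_mult_intertwine centralizer_sym sum_subtractf)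
  also have "(\<Sum>j\<in>{1..N}. Bbar emb h n (wbar j) - Bbar emb h n (shifted j))
      = Bbar emb h n (wbar i) - Bbar emb h n (wbar i + s)"
  proof -
    have "(\<Sum>j\<in>{1..N}. Bbar emb h n (wbar j) - Bbar emb h n (shifted j))
        = (\<Sum>j\<in>{1..N}. if j = i then Bbar emb h n (wbar i) - Bbar emb h n (wbar i + s) else 0)"
      by (intro sum.cong) (auto simp: shifted_def)
    with i show ?thesis
      by simp
  qed
  finally show ?thesis .
qed

lemma comm_Bbar_sum_E1:
  assumes n: "n \<ge> 1"
    and uw: "\<And>i j. i \<in> {1..N} \<Longrightarrow> j \<in> {1..N} \<Longrightarrow>
               u i * w j - w j * u i = (if i = j then h * u i else 0)"
  shows "comm (\<Sum>i\<in>{1..N}. Bbar emb h n (wbar i)) (E1 N w u d t (peval emb f))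
       = - (h * E1 N w u d t (\<lambda>x. peval emb f x * (x - of_nat (N - 1) * t + h) ^ (n - 1)))"
proof -
  define P where "P i = prod_list (map (\<lambda>j. (w i - w j - t) * d i j) (filter (\<lambda>j. j \<noteq> i) [1..<N+1]))" for i
  have P: "P i \<in> centralizer (w k)" if "i \<in> {1..N}" "k \<in> {1..N}" for i k
    using that unfolding P_def by (intro centralizer_prod_list) (auto simp del: upt_Suc intro!: centralizer_mult centralizer_diff)
  have summand: "comm (\<Sum>j\<in>{1..N}. Bbar emb h n (wbar j)) (peval emb f (w i) * P i * u i)
      = - (h * (peval emb f (w i) * (wbar i + h) ^ (n - 1) * P i * u i))" if i: "i \<in> {1..N}" for i
  proof -
    have "u i * w j = (w j + (if j = i then h else 0)) * u i" if "j \<in> {1..N}" for j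
      using uw[OF i that] by (auto simp: algebra_simps)
    then have "comm (\<Sum>j\<in>{1..N}. Bbar emb h n (wbar j)) (peval emb f (w i) * P i * u i)
        = peval emb f (w i) * P i * (Bbar emb h n (wbar i) - Bbar emb h n (wbar i + h)) * u i"
      using i P by (intro comm_Bbar_sum_shift h_central) (auto intro!: centralizer_mult peval_in_centralizer)
    also have "Bbar emb h n (wbar i) - Bbar emb h n (wbar i + h) = - (h * (wbar i + h) ^ (n - 1))"
      by (rule Bbar_diff[OF h_central n])
    also have "peval emb f (w i) * P i * - (h * (wbar i + h) ^ (n - 1)) * u i
        = - (h * (peval emb f (w i) * (P i * (wbar i + h) ^ (n - 1)) * u i))"
      by (simp add: mult.assoc h_commute_left)
    also have "P i * (wbar i + h) ^ (n - 1) = (wbar i + h) ^ (n - 1) * P i"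
    proof -
      have "(wbar i + h) ^ (n - 1) \<in> centralizer (P i)"
        using wbar_in_centralizer[OF P[OF i] i] by blast
      then show ?thesis
        by (simp add: centralizer_def)
    qed
    finally show ?thesis
      by (simp add: mult.assoc)
  qed
  then show ?thesis
    unfolding E1_def P_def[symmetric] comm_sum wbar_def by (simp add: sum_distrib_left sum_negf)
qed

lemma comm_Bbar_sum_F1:
  assumes n: "n \<ge> 1"
    and uiw: "\<And>i j. i \<in> {1..N} \<Longrightarrow> j \<in> {1..N} \<Longrightarrow>
               ui i * w j - w j * ui i = (if i = j then - (h * ui i) else 0)"
  shows "comm (\<Sum>i\<in>{1..N}. Bbar emb h n (wbar i)) (F1 N w ui d t h (peval emb f))
       = h * F1 N w ui d t h (\<lambda>x. peval emb f x * (x - of_nat (N - 1) * t + h) ^ (n - 1))"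
proof -
  define P where "P i = prod_list (map (\<lambda>j. (w i - w j + t) * d i j) (filter (\<lambda>j. j \<noteq> i) [1..<N+1]))" for i
  have P: "P i \<in> centralizer (w k)" if "i \<in> {1..N}" "k \<in> {1..N}" for i k
    using that unfolding P_def
    by (intro centralizer_prod_list) (auto simp del: upt_Suc intro!: centralizer_mult centralizer_add centralizer_diff)
  have summand: "comm (\<Sum>j\<in>{1..N}. Bbar emb h n (wbar j)) (peval emb f (w i - h) * P i * ui i)
      = h * (peval emb f (w i - h) * wbar i ^ (n - 1) * P i * ui i)" if i: "i \<in> {1..N}" for i
  proof -
    have "ui i * w j = (w j + (if j = i then - h else 0)) * ui i" if "j \<in> {1..N}" for j
      using uiw[OF i that] by (auto simp: algebra_simps)
    then have "comm (\<Sum>j\<in>{1..N}. Bbar emb h n (wbar j)) (peval emb f (w i - h) * P i * ui i)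
        = peval emb f (w i - h) * P i * (Bbar emb h n (wbar i) - Bbar emb h n (wbar i + - h)) * ui i"
      using i P h_central by (intro comm_Bbar_sum_shift)
        (auto intro!: centralizer_mult centralizer_diff peval_in_centralizer)
    also have "Bbar emb h n (wbar i) - Bbar emb h n (wbar i + - h) = h * wbar i ^ (n - 1)"
      using Bbar_diff[OF h_central n, of "wbar i + - h"] by (simp add: algebra_simps)
    also have "peval emb f (w i - h) * P i * (h * wbar i ^ (n - 1)) * ui i
        = h * (peval emb f (w i - h) * (P i * wbar i ^ (n - 1)) * ui i)"
      by (simp add: mult.assoc h_commute_left)
    also have "P i * wbar i ^ (n - 1) = wbar i ^ (n - 1) * P i"
    proof -
      have "wbar i ^ (n - 1) \<in> centralizer (P i)"
        using wbar_in_centralizer[OF P[OF i] i] by blast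
      then show ?thesis
        by (simp add: centralizer_def)
    qed
    finally show ?thesis
      by (simp add: mult.assoc)
  qed
  have "w i - h - of_nat (N - 1) * t + h = wbar i" for i
    by (simp add: wbar_def)
  with summand show ?thesis
    unfolding F1_def P_def[symmetric] comm_sum sum_distrib_left by (simp only: cong: sum.cong)
qed

end

theorem lemma6p4:
  fixes emb :: "complex \<Rightarrow> 'a::ring_1"
    and h t :: 'a
    and w u ui :: "nat \<Rightarrow> 'a"
    and d :: "nat \<Rightarrow> nat \<Rightarrow> 'a"
    and N n :: nat
    and f :: "complex poly"
  assumes emb_1: "emb 1 = 1"
    and emb_add: "\<And>a b. emb (a + b) = emb a + emb b"
    and emb_mult: "\<And>a b. emb (a * b) = emb a * emb b"
    and emb_central: "\<And>a x. emb a * x = x * emb a"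
    and h_central: "\<And>x. h * x = x * h"
    and t_central: "\<And>x. t * x = x * t"
    and w_comm: "\<And>i j. i \<in> {1..N} \<Longrightarrow> j \<in> {1..N} \<Longrightarrow> w i * w j = w j * w i"
    and wd_comm: "\<And>i j k. i \<in> {1..N} \<Longrightarrow> j \<in> {1..N} \<Longrightarrow> k \<in> {1..N} \<Longrightarrow> i \<noteq> j \<Longrightarrow>
                   w k * d i j = d i j * w k"
    and dd_comm: "\<And>i j k l. i \<in> {1..N} \<Longrightarrow> j \<in> {1..N} \<Longrightarrow> k \<in> {1..N} \<Longrightarrow> l \<in> {1..N} \<Longrightarrow>
                   i \<noteq> j \<Longrightarrow> k \<noteq> l \<Longrightarrow> d i j * d k l = d k l * d i j"
    and d_inv: "\<And>i j. i \<in> {1..N} \<Longrightarrow> j \<in> {1..N} \<Longrightarrow> i \<noteq> j \<Longrightarrow> (w i - w j) * d i j = 1"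
    and u_comm: "\<And>i j. i \<in> {1..N} \<Longrightarrow> j \<in> {1..N} \<Longrightarrow> u i * u j = u j * u i"
    and u_inv1: "\<And>i. i \<in> {1..N} \<Longrightarrow> u i * ui i = 1"
    and u_inv2: "\<And>i. i \<in> {1..N} \<Longrightarrow> ui i * u i = 1"
    and uw: "\<And>i j. i \<in> {1..N} \<Longrightarrow> j \<in> {1..N} \<Longrightarrow>
               u i * w j - w j * u i = (if i = j then h * u i else 0)"
    and uiw: "\<And>i j. i \<in> {1..N} \<Longrightarrow> j \<in> {1..N} \<Longrightarrow>
               ui i * w j - w j * ui i = (if i = j then - (h * ui i) else 0)"
    and N_pos: "N \<ge> 1"
    and n_pos: "n \<ge> 1"
  shows "comm (\<Sum>i\<in>{1..N}. Bbar emb h n (w i - of_nat (N - 1) * t)) (E1 N w u d t (peval emb f))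
           = - (h * E1 N w u d t (\<lambda>x. peval emb f x * (x - of_nat (N - 1) * t + h) ^ (n - 1)))
       \<and> comm (\<Sum>i\<in>{1..N}. Bbar emb h n (w i - of_nat (N - 1) * t)) (F1 N w ui d t h (peval emb f))
           = h * F1 N w ui d t h (\<lambda>x. peval emb f x * (x - of_nat (N - 1) * t + h) ^ (n - 1))"
proof -
  interpret shift_operators emb N h t w d
    by unfold_locales (fact emb_1 emb_add emb_mult emb_central h_central t_central w_comm wd_comm)+
  show ?thesis
    using comm_Bbar_sum_E1[OF n_pos uw] comm_Bbar_sum_F1[OF n_pos uiw] unfolding wbar_def by (rule conjI)
qed

end
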